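(* Assume $\Pi$ is realizable ($\pi^\star\in\Pi$). Fix any layer $h\in[H]$. For any suffix policy $\hat\pi_{h+1:H}\in\Pi_{h+1:H}$, $$\varepsilon_{\mathrm{PC}}(\hat\pi_{h+1:H})\le C_{\mathrm{push}}\cdot\mathbb{E}_{x'\sim\mu_{h+1}}\big[V^\star(x')-V^{\hat\pi}(x')\big],$$ with the convention that for $h=H$ the right-hand side is $0$.
   Context: Layered finite-horizon MDP with layers $\mathcal{X}_1,\dots,\mathcal{X}_H$, actions $\mathcal{A}$, rewards with $\sum_h r_h\in[0,1]$ a.s.; $\pi^\star$ an optimal deterministic policy, $V^\star=V^{\pi^\star}$. $\Pi$ is a class of deterministic policies, $\Pi_h$ its restrictions to $\mathcal{X}_h$, $\Pi_{h+1:H}$ its restrictions to layers $h+1,\dots,H$. For $x\in\mathcal{X}_h$, $Q^{\hat\pi}(x,a)$ is the expected return from playing $a$ at $x$ and then following $\hat\pi_{h+1:H}$, $Q^{\hat\pi}(x,\pi_h):=Q^{\hat\pi}(x,\pi_h(x))$, and for $x'\in\mathcal{X}_{h+1}$, $V^{\hat\pi}(x')$ is the return of following $\hat\pi_{h+1:H}$ from $x'$. Reset distribution $\mu=\{\mu_h\}$, $\mu_h\in\Delta(\mathcal{X}_h)$, with pushforward concentrability $C_{\mathrm{push}}=\max_{2\le h\le H}\sup_{x\in\mathcal{X}_{h-1},a,x'\in\mathcal{X}_h}P(x'\mid x,a)/\mu_h(x')$. Average policy-completeness error: $\varepsilon_{\mathrm{PC}}(\hat\pi_{h+1:H}):=\min_{\pi_h\in\Pi_h}\mathbb{E}_{x\sim\mu_h}[\max_{a\in\mathcal{A}}Q^{\hat\pi}(x,a)-Q^{\hat\pi}(x,\pi_h)]$.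 *)

theory Defs
  imports "HOL-Probability.Probability"
begin

text \<open>P x a is the next-state distribution, r x a the (expected) reward.\<close>

definition layered_mdp ::
  "nat \<Rightarrow> (nat \<Rightarrow> 'x set) \<Rightarrow> ('x \<Rightarrow> 'a \<Rightarrow> 'x pmf) \<Rightarrow> bool" where
  "layered_mdp H X P \<longleftrightarrow> 1 \<le> H
     \<and> (\<forall>h\<in>{1..H}. \<forall>h'\<in>{1..H}. h \<noteq> h' \<longrightarrow> X h \<inter> X h' = {})
     \<and> (\<forall>h\<in>{1..<H}. \<forall>x\<in>X h. \<forall>a. set_pmf (P x a) \<subseteq> X (Suc h))"

definition rewards_bounded ::
  "nat \<Rightarrow> (nat \<Rightarrow> 'x set) \<Rightarrow> ('x \<Rightarrow> 'a \<Rightarrow> 'x pmf) \<Rightarrow> ('x \<Rightarrow> 'a \<Rightarrow> real) \<Rightarrow> bool" where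
  "rewards_bounded H X P r \<longleftrightarrow>
     (\<forall>h\<in>{1..H}. \<forall>(xs :: nat \<Rightarrow> 'x) (as :: nat \<Rightarrow> 'a).
        xs h \<in> X h \<and> (\<forall>i\<in>{h..<H}. xs (Suc i) \<in> set_pmf (P (xs i) (as i)))
        \<longrightarrow> 0 \<le> (\<Sum>i=h..H. r (xs i) (as i)) \<and> (\<Sum>i=h..H. r (xs i) (as i)) \<le> 1)"

fun Vsteps ::
  "('x \<Rightarrow> 'a \<Rightarrow> 'x pmf) \<Rightarrow> ('x \<Rightarrow> 'a \<Rightarrow> real) \<Rightarrow> ('x \<Rightarrow> 'a) \<Rightarrow> nat \<Rightarrow> 'x \<Rightarrow> real" where
  "Vsteps P r p 0 x = 0"
| "Vsteps P r p (Suc n) x =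
     r x (p x) + measure_pmf.expectation (P x (p x)) (Vsteps P r p n)"

text \<open>V^p(x) for x in layer h: follow p on layers h..H.\<close>
definition Vfun ::
  "nat \<Rightarrow> ('x \<Rightarrow> 'a \<Rightarrow> 'x pmf) \<Rightarrow> ('x \<Rightarrow> 'a \<Rightarrow> real) \<Rightarrow> ('x \<Rightarrow> 'a) \<Rightarrow> nat \<Rightarrow> 'x \<Rightarrow> real" where
  "Vfun H P r p h x = Vsteps P r p (Suc H - h) x"

text \<open>Q^p(x,a) for x in layer h: play a, then follow p on layers h+1..H.\<close>
definition Qfun ::
  "nat \<Rightarrow> ('x \<Rightarrow> 'a \<Rightarrow> 'x pmf) \<Rightarrow> ('x \<Rightarrow> 'a \<Rightarrow> real) \<Rightarrow> ('x \<Rightarrow> 'a) \<Rightarrow> nat \<Rightarrow> 'x \<Rightarrow> 'a \<Rightarrow> real" where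
  "Qfun H P r p h x a = r x a + measure_pmf.expectation (P x a) (Vsteps P r p (H - h))"

definition optimal_policy ::
  "nat \<Rightarrow> (nat \<Rightarrow> 'x set) \<Rightarrow> ('x \<Rightarrow> 'a \<Rightarrow> 'x pmf) \<Rightarrow> ('x \<Rightarrow> 'a \<Rightarrow> real) \<Rightarrow> ('x \<Rightarrow> 'a) \<Rightarrow> bool" where
  "optimal_policy H X P r pistar \<longleftrightarrow>
     (\<forall>h\<in>{1..H}. \<forall>x\<in>X h. \<forall>p. Vfun H P r p h x \<le> Vfun H P r pistar h x)"

text \<open>Pushforward concentrability: the sup over ratios P(x'|x,a)/mu_h(x'),
  written as the least C \<ge> 0 with P(x'|x,a) \<le> C mu_h(x') (this handles mu_h(x') = 0 correctly).\<close>
definition push_ok ::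
  "nat \<Rightarrow> (nat \<Rightarrow> 'x set) \<Rightarrow> ('x \<Rightarrow> 'a \<Rightarrow> 'x pmf) \<Rightarrow> (nat \<Rightarrow> 'x pmf) \<Rightarrow> real \<Rightarrow> bool" where
  "push_ok H X P mu C \<longleftrightarrow> 0 \<le> C \<and>
     (\<forall>h\<in>{2..H}. \<forall>x\<in>X (h - 1). \<forall>a. \<forall>x'\<in>X h. pmf (P x a) x' \<le> C * pmf (mu h) x')"

definition C_push ::
  "nat \<Rightarrow> (nat \<Rightarrow> 'x set) \<Rightarrow> ('x \<Rightarrow> 'a \<Rightarrow> 'x pmf) \<Rightarrow> (nat \<Rightarrow> 'x pmf) \<Rightarrow> real" where
  "C_push H X P mu = Inf {C. push_ok H X P mu C}"

text \<open>Average policy-completeness error of the suffix of pihat (layers h+1..H) at layer h;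
  the minimum over Pi_h is an infimum over the restrictions to X h of the policies in Pol
  (the expectation only sees X h since mu_h is supported there).\<close>
definition eps_PC ::
  "nat \<Rightarrow> ('x \<Rightarrow> 'a \<Rightarrow> 'x pmf) \<Rightarrow> ('x \<Rightarrow> 'a \<Rightarrow> real) \<Rightarrow> (nat \<Rightarrow> 'x pmf) \<Rightarrow> ('x \<Rightarrow> 'a) set
     \<Rightarrow> nat \<Rightarrow> ('x \<Rightarrow> 'a) \<Rightarrow> real" where
  "eps_PC H P r mu Pol h pihat =
     (INF p\<in>Pol. measure_pmf.expectation (mu h)
        (\<lambda>x. (SUP a. Qfun H P r pihat h x a) - Qfun H P r pihat h x (p x)))"

end

theory Submission
  imports Defs
begin

text \<open>Realizability bounds the infimum in \<open>eps_PC\<close> by its value at \<open>\<pi>\<^sup>\<star>\<close>. Fix \<open>x\<close> in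
  layer \<open>h\<close>. Since \<open>V\<^sup>\<pi> \<le> V\<^sup>\<star>\<close> on layer \<open>h+1\<close>, \<open>Q\<^sup>\<pi>(x,a) \<le> Q\<^sup>\<star>(x,a)\<close>; and because the layers are
  disjoint, \<open>Q\<^sup>\<star>(x,a)\<close> is the value at \<open>x\<close> of the policy playing \<open>a\<close> at \<open>x\<close> and \<open>\<pi>\<^sup>\<star>\<close>
  elsewhere, so \<open>Q\<^sup>\<star>(x,a) \<le> V\<^sup>\<star>(x) = Q\<^sup>\<star>(x,\<pi>\<^sup>\<star>(x))\<close>. Hence the gap
  \<open>max\<^sub>a Q\<^sup>\<pi>(x,a) - Q\<^sup>\<pi>(x,\<pi>\<^sup>\<star>(x))\<close> is at most \<open>Q\<^sup>\<star>(x,\<pi>\<^sup>\<star>(x)) - Q\<^sup>\<pi>(x,\<pi>\<^sup>\<star>(x))\<close>, the expectation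
  of the nonnegative function \<open>V\<^sup>\<star> - V\<^sup>\<pi>\<close> under \<open>P(x,\<pi>\<^sup>\<star>(x))\<close>, and the density bound
  \<open>P(x,a) \<le> C_push \<cdot> \<mu>\<^sub>h\<^sub>+\<^sub>1\<close> turns it into \<open>C_push\<close> times the expectation under \<open>\<mu>\<^sub>h\<^sub>+\<^sub>1\<close>.\<close>

lemma integrable_measure_pmf_bounded:
  fixes f :: "'b \<Rightarrow> real"
  assumes "\<And>y. y \<in> set_pmf p \<Longrightarrow> \<bar>f y\<bar> \<le> B"
  shows "integrable (measure_pmf p) f"
  using assms by (intro measure_pmf.integrable_const_bound[where B=B] AE_pmfI) auto

lemma pmf_expectation_bounds:
  fixes f :: "'b \<Rightarrow> real"
  assumes "\<And>y. y \<in> set_pmf p \<Longrightarrow> a \<le> f y \<and> f y \<le> b"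
  shows "a \<le> measure_pmf.expectation p f \<and> measure_pmf.expectation p f \<le> b"
proof -
  have "integrable (measure_pmf p) f"
    using assms by (intro integrable_measure_pmf_bounded[where B="\<bar>a\<bar> + \<bar>b\<bar>"]) fastforce
  with assms show ?thesis
    by (auto intro!: measure_pmf.integral_ge_const measure_pmf.integral_le_const AE_pmfI)
qed

lemma pmf_expectation_cong:
  fixes f g :: "'b \<Rightarrow> real"
  shows "(\<And>y. y \<in> set_pmf p \<Longrightarrow> f y = g y) \<Longrightarrow>
    measure_pmf.expectation p f = measure_pmf.expectation p g"
  by (intro integral_cong_AE AE_pmfI) auto

lemma pmf_expectation_le_if_pmf_le:
  fixes f :: "'b \<Rightarrow> real"
  assumes dom: "\<And>y. pmf p y \<le> C * pmf q y"
    and f: "\<And>y. y \<in> set_pmf q \<Longrightarrow> 0 \<le> f y \<and> f y \<le> B"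
  shows "measure_pmf.expectation p f \<le> C * measure_pmf.expectation q f"
proof -
  obtain y0 where "y0 \<in> set_pmf p" using set_pmf_not_empty[of p] by blast
  then have "0 < C * pmf q y0" using dom[of y0] pmf_positive by fastforce
  then have C: "0 \<le> C" by (simp add: zero_less_mult_iff)
  have supp: "set_pmf p \<subseteq> set_pmf q"
    using dom by (auto simp: set_pmf_iff) (metis mult_zero_right order.antisym pmf_nonneg)
  \<comment> \<open>\<open>f\<close> may be negative off the support of \<open>q\<close>\<close>
  define g where "g y = (if y \<in> set_pmf q then f y else 0)" for y
  have g0: "0 \<le> g y" for y using f by (simp add: g_def)
  have int: "integrable (measure_pmf s) g" for s
    using f by (intro integrable_measure_pmf_bounded[where B="\<bar>B\<bar>"]) (force simp: g_def)
  have "ennreal (measure_pmf.expectation p g)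
      = (\<integral>\<^sup>+ y. ennreal (pmf p y) * ennreal (g y) \<partial>count_space UNIV)"
    by (simp add: nn_integral_eq_integral[symmetric] int g0 nn_integral_measure_pmf)
  also have "\<dots> \<le> (\<integral>\<^sup>+ y. ennreal C * (ennreal (pmf q y) * ennreal (g y)) \<partial>count_space UNIV)"
  proof (rule nn_integral_mono)
    fix y
    have "pmf p y * g y \<le> C * pmf q y * g y"
      using dom g0 by (intro mult_right_mono)
    then show "ennreal (pmf p y) * ennreal (g y) \<le> ennreal C * (ennreal (pmf q y) * ennreal (g y))"
      using C g0
      by (simp add: ennreal_mult'[symmetric] ennreal_mult[symmetric] mult.assoc ennreal_leI)
  qed
  also have "\<dots> = ennreal C * (\<integral>\<^sup>+ y. ennreal (g y) \<partial>measure_pmf q)"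
    by (simp add: nn_integral_cmult nn_integral_measure_pmf)
  also have "\<dots> = ennreal (C * measure_pmf.expectation q g)"
    using C g0 by (simp add: nn_integral_eq_integral int ennreal_mult integral_nonneg_AE)
  finally have "measure_pmf.expectation p g \<le> C * measure_pmf.expectation q g"
    using C g0 by (simp add: ennreal_le_iff integral_nonneg_AE)
  moreover have "measure_pmf.expectation p f = measure_pmf.expectation p g"
    "measure_pmf.expectation q f = measure_pmf.expectation q g"
    using supp by (auto intro!: pmf_expectation_cong simp: g_def)
  ultimately show ?thesis by simp
qed

definition feasible_path ::
  "('x \<Rightarrow> 'a \<Rightarrow> 'x pmf) \<Rightarrow> (nat \<Rightarrow> 'x) \<Rightarrow> (nat \<Rightarrow> 'a) \<Rightarrow> nat \<Rightarrow> nat \<Rightarrow> bool" where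
  "feasible_path P xs as h k \<longleftrightarrow> (\<forall>i\<in>{h..<k}. xs (Suc i) \<in> set_pmf (P (xs i) (as i)))"

lemma Vfun_Suc_H [simp]: "Vfun H P r p (Suc H) = (\<lambda>_. 0)"
  by (rule ext) (simp add: Vfun_def)

lemma Qfun_Vfun_Suc:
  "Qfun H P r p h x a = r x a + measure_pmf.expectation (P x a) (Vfun H P r p (Suc h))"
  by (simp add: Qfun_def Vfun_def[abs_def])

lemma Vfun_eq_Qfun: "h \<le> H \<Longrightarrow> Vfun H P r p h x = Qfun H P r p h x (p x)"
  by (simp add: Qfun_def Vfun_def Suc_diff_le)

lemma layers_disjoint:
  assumes "layered_mdp H X P" and "h \<in> {1..H}" and "j \<in> {1..H}" and "h \<noteq> j"
  shows "X h \<inter> X j = {}"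
  using assms unfolding layered_mdp_def by blast

lemma set_pmf_next_layer:
  assumes "layered_mdp H X P" and "h \<in> {1..<H}" and "x \<in> X h"
  shows "set_pmf (P x a) \<subseteq> X (Suc h)"
  using assms unfolding layered_mdp_def by auto

text \<open>The return collected along a feasible path up to layer \<open>k\<close>, completed by the value of
  any policy from there on, is an average of returns of complete paths.\<close>

lemma partial_return_plus_Vfun_bounds:
  assumes rew: "rewards_bounded H X P r" and h: "h \<in> {1..H}" and start: "xs h \<in> X h"
    and "k \<le> Suc H" and "h \<le> k" and "feasible_path P xs as h k"
  shows "0 \<le> (\<Sum>i=h..<k. r (xs i) (as i)) + Vfun H P r p k (xs k)
    \<and> (\<Sum>i=h..<k. r (xs i) (as i)) + Vfun H P r p k (xs k) \<le> 1"
  using assms(4-) start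
proof (induction k arbitrary: xs as rule: inc_induct)
  case base
  then show ?case
    using rew h
    by (simp add: rewards_bounded_def feasible_path_def atLeastLessThanSuc_atLeastAtMost)
next
  case (step k)
  define S where "S = (\<Sum>i=h..<k. r (xs i) (as i))"
  define a where "a = p (xs k)"
  have next_bounds:
    "- S - r (xs k) a \<le> Vfun H P r p (Suc k) y \<and> Vfun H P r p (Suc k) y \<le> 1 - S - r (xs k) a"
    if y: "y \<in> set_pmf (P (xs k) a)" for y
  proof -
    let ?xs = "xs(Suc k := y)" and ?as = "as(k := a)"
    have path: "feasible_path P ?xs ?as h (Suc k)"
      using step.prems(2) y by (auto simp: feasible_path_def less_Suc_eq)
    have "0 \<le> (\<Sum>i=h..<Suc k. r (?xs i) (?as i)) + Vfun H P r p (Suc k) (?xs (Suc k))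
      \<and> (\<Sum>i=h..<Suc k. r (?xs i) (?as i)) + Vfun H P r p (Suc k) (?xs (Suc k)) \<le> 1"
      using step.IH[of ?xs ?as, OF _ path] step.prems by simp
    moreover have "(\<Sum>i=h..<Suc k. r (?xs i) (?as i)) = S + r (xs k) a"
      using step.prems(1) by (simp add: S_def sum.atLeastLessThan_Suc)
    ultimately show ?thesis by simp
  qed
  have "Vfun H P r p k (xs k)
      = r (xs k) a + measure_pmf.expectation (P (xs k) a) (Vfun H P r p (Suc k))"
    using step.hyps by (simp add: Vfun_eq_Qfun Qfun_Vfun_Suc a_def)
  moreover have "- S - r (xs k) a \<le> measure_pmf.expectation (P (xs k) a) (Vfun H P r p (Suc k))
    \<and> measure_pmf.expectation (P (xs k) a) (Vfun H P r p (Suc k)) \<le> 1 - S - r (xs k) a"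
    by (rule pmf_expectation_bounds) (rule next_bounds)
  ultimately show ?case by (simp add: S_def)
qed

lemma Vfun_bounds:
  assumes "rewards_bounded H X P r" and "h \<in> {1..H}" and "x \<in> X h"
  shows "0 \<le> Vfun H P r p h x \<and> Vfun H P r p h x \<le> 1"
  using partial_return_plus_Vfun_bounds[OF assms(1,2), of "\<lambda>_. x" h] assms(2,3)
  by (simp add: feasible_path_def)

lemma Vfun_Suc_bounds:
  assumes "layered_mdp H X P" and "rewards_bounded H X P r" and "h \<in> {1..H}" and "x \<in> X h"
    and "y \<in> set_pmf (P x a)"
  shows "0 \<le> Vfun H P r p (Suc h) y \<and> Vfun H P r p (Suc h) y \<le> 1"
proof (cases "h = H")
  case False
  with assms set_pmf_next_layer[OF assms(1), of h x a] show ?thesis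
    by (intro Vfun_bounds[OF assms(2)]) auto
qed simp

lemma Vfun_cong_later_layers:
  assumes mdp: "layered_mdp H X P" and agree: "\<And>j z. j \<in> {k..H} \<Longrightarrow> z \<in> X j \<Longrightarrow> p z = q z"
    and "k \<in> {1..H}" and "y \<in> X k"
  shows "Vfun H P r p k y = Vfun H P r q k y"
proof -
  have "\<forall>y\<in>X n. Vfun H P r p n y = Vfun H P r q n y" if "n \<le> H" "k \<le> n" for n
    using that
  proof (induction n rule: inc_induct)
    case base
    then show ?case using agree[of H] by (simp add: Vfun_eq_Qfun Qfun_Vfun_Suc)
  next
    case (step n)
    show ?case
    proof
      fix y assume y: "y \<in> X n"
      have "1 \<le> n" using step.prems \<open>k \<in> {1..H}\<close> by simp
      then have "measure_pmf.expectation (P y (p y)) (Vfun H P r p (Suc n))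
          = measure_pmf.expectation (P y (p y)) (Vfun H P r q (Suc n))"
        using step set_pmf_next_layer[OF mdp, of n y] y by (intro pmf_expectation_cong) auto
      moreover have "p y = q y" using agree[of n] step y by simp
      ultimately show "Vfun H P r p n y = Vfun H P r q n y"
        using step.hyps by (simp add: Vfun_eq_Qfun Qfun_Vfun_Suc)
    qed
  qed
  then show ?thesis using assms by auto
qed

lemma Qfun_eq_Vfun_update:
  assumes mdp: "layered_mdp H X P" and h: "h \<in> {1..H}" and x: "x \<in> X h"
  shows "Qfun H P r p h x a = Vfun H P r (p(x := a)) h x"
proof -
  have "Vfun H P r p (Suc h) y = Vfun H P r (p(x := a)) (Suc h) y" if y: "y \<in> set_pmf (P x a)" for y
  proof (cases "h = H")
    case False
    have "p z = (p(x := a)) z" if "j \<in> {Suc h..H}" "z \<in> X j" for j z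
      using layers_disjoint[OF mdp h, of j] h x that by auto
    moreover have "y \<in> X (Suc h)" using False h x y set_pmf_next_layer[OF mdp, of h x a] by auto
    ultimately show ?thesis
      using False h by (intro Vfun_cong_later_layers[OF mdp]) auto
  qed simp
  then have "measure_pmf.expectation (P x a) (Vfun H P r p (Suc h))
      = measure_pmf.expectation (P x a) (Vfun H P r (p(x := a)) (Suc h))"
    by (rule pmf_expectation_cong)
  then show ?thesis
    using h by (simp add: Vfun_eq_Qfun Qfun_Vfun_Suc)
qed

lemma Qfun_bounds:
  assumes "layered_mdp H X P" and "rewards_bounded H X P r" and "h \<in> {1..H}" and "x \<in> X h"
  shows "0 \<le> Qfun H P r p h x a \<and> Qfun H P r p h x a \<le> 1"
  using Qfun_eq_Vfun_update[OF assms(1,3,4)] Vfun_bounds[OF assms(2-4)] by simp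

lemma Qfun_le_SUP:
  assumes "layered_mdp H X P" and "rewards_bounded H X P r" and "h \<in> {1..H}" and "x \<in> X h"
  shows "Qfun H P r p h x b \<le> (SUP a. Qfun H P r p h x a)"
  using Qfun_bounds[OF assms] by (intro cSUP_upper bdd_aboveI2[where M=1]) auto

lemma Vfun_Suc_le_optimal:
  assumes mdp: "layered_mdp H X P" and opt: "optimal_policy H X P r pistar"
    and h: "h \<in> {1..H}" and x: "x \<in> X h" and y: "y \<in> set_pmf (P x a)"
  shows "Vfun H P r p (Suc h) y \<le> Vfun H P r pistar (Suc h) y"
proof (cases "h = H")
  case False
  then show ?thesis
    using opt h x y set_pmf_next_layer[OF mdp, of h x a] unfolding optimal_policy_def by auto
qed simp

lemma Qfun_le_Qfun_optimal:
  assumes mdp: "layered_mdp H X P" and rew: "rewards_bounded H X P r"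
    and opt: "optimal_policy H X P r pistar" and h: "h \<in> {1..H}" and x: "x \<in> X h"
  shows "Qfun H P r p h x a \<le> Qfun H P r pistar h x a"
proof -
  have "measure_pmf.expectation (P x a) (Vfun H P r p (Suc h))
      \<le> measure_pmf.expectation (P x a) (Vfun H P r pistar (Suc h))"
    using Vfun_Suc_bounds[OF mdp rew h x] Vfun_Suc_le_optimal[OF mdp opt h x]
    by (intro integral_mono_AE integrable_measure_pmf_bounded[where B=1] AE_pmfI) auto
  then show ?thesis by (simp add: Qfun_Vfun_Suc)
qed

lemma Qfun_optimal_le_optimal_action:
  assumes mdp: "layered_mdp H X P" and opt: "optimal_policy H X P r pistar"
    and h: "h \<in> {1..H}" and x: "x \<in> X h"
  shows "Qfun H P r pistar h x a \<le> Qfun H P r pistar h x (pistar x)"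
proof -
  have "Qfun H P r pistar h x a = Vfun H P r (pistar(x := a)) h x"
    by (rule Qfun_eq_Vfun_update[OF mdp h x])
  also have "\<dots> \<le> Vfun H P r pistar h x"
    using opt h x unfolding optimal_policy_def by blast
  also have "\<dots> = Qfun H P r pistar h x (pistar x)"
    using h by (simp add: Vfun_eq_Qfun)
  finally show ?thesis .
qed

lemma SUP_Qfun_le_optimal:
  assumes mdp: "layered_mdp H X P" and rew: "rewards_bounded H X P r"
    and opt: "optimal_policy H X P r pistar" and h: "h \<in> {1..H}" and x: "x \<in> X h"
  shows "(SUP a. Qfun H P r p h x a) \<le> Qfun H P r pistar h x (pistar x)"
  using order_trans[OF Qfun_le_Qfun_optimal[OF assms] Qfun_optimal_le_optimal_action[OF mdp opt h x]]
  by (intro cSUP_least) auto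

lemma push_ok_C_push:
  assumes "\<exists>C. push_ok H X P mu C"
  shows "push_ok H X P mu (C_push H X P mu)"
proof -
  let ?S = "{C. push_ok H X P mu C}"
  have ne: "?S \<noteq> {}" using assms by auto
  have "0 \<le> Inf ?S" by (rule cInf_greatest[OF ne]) (auto simp: push_ok_def)
  moreover have "pmf (P x a) x' \<le> Inf ?S * pmf (mu h) x'"
    if h: "h \<in> {2..H}" and x: "x \<in> X (h - 1)" and x': "x' \<in> X h" for h x a x'
  proof (cases "pmf (mu h) x' = 0")
    case True
    obtain C where "push_ok H X P mu C" using assms by auto
    then show ?thesis using True h x x' unfolding push_ok_def by fastforce
  next
    case False
    then have pos: "0 < pmf (mu h) x'" by (simp add: order_less_le)
    have "pmf (P x a) x' / pmf (mu h) x' \<le> Inf ?S"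
    proof (rule cInf_greatest[OF ne])
      fix C assume "C \<in> ?S"
      then have "pmf (P x a) x' \<le> C * pmf (mu h) x'" using h x x' unfolding push_ok_def by auto
      then show "pmf (P x a) x' / pmf (mu h) x' \<le> C" using pos by (simp add: divide_le_eq)
    qed
    then show ?thesis using pos by (simp add: divide_le_eq)
  qed
  ultimately show ?thesis unfolding push_ok_def C_push_def by auto
qed

lemma pmf_le_C_push_next:
  assumes mdp: "layered_mdp H X P" and conc: "\<exists>C. push_ok H X P mu C"
    and h: "h \<in> {1..<H}" and x: "x \<in> X h"
  shows "pmf (P x a) y \<le> C_push H X P mu * pmf (mu (Suc h)) y"
proof -
  have push: "push_ok H X P mu (C_push H X P mu)" by (rule push_ok_C_push[OF conc])
  show ?thesis
  proof (cases "y \<in> X (Suc h)")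
    case True
    moreover have "Suc h \<in> {2..H}" and "x \<in> X (Suc h - 1)" using h x by auto
    ultimately show ?thesis using push unfolding push_ok_def by blast
  next
    case False
    then have "pmf (P x a) y = 0"
      using set_pmf_next_layer[OF mdp h x, of a] by (auto simp: set_pmf_iff)
    then show ?thesis using push unfolding push_ok_def by simp
  qed
qed

lemma Qfun_gap_le:
  assumes mdp: "layered_mdp H X P" and rew: "rewards_bounded H X P r"
    and reset: "\<forall>k\<in>{1..H}. set_pmf (mu k) \<subseteq> X k" and conc: "\<exists>C. push_ok H X P mu C"
    and opt: "optimal_policy H X P r pistar" and h: "h \<in> {1..H}" and x: "x \<in> X h"
  shows "(SUP a. Qfun H P r pihat h x a) - Qfun H P r pihat h x (pistar x) \<le>
    (if h = H then 0
     else C_push H X P mu *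
       measure_pmf.expectation (mu (Suc h))
         (\<lambda>y. Vfun H P r pistar (Suc h) y - Vfun H P r pihat (Suc h) y))"
proof -
  let ?a = "pistar x" and ?D = "\<lambda>y. Vfun H P r pistar (Suc h) y - Vfun H P r pihat (Suc h) y"
  have int: "integrable (measure_pmf (P x ?a)) (Vfun H P r p (Suc h))" for p
    using Vfun_Suc_bounds[OF mdp rew h x] by (intro integrable_measure_pmf_bounded[where B=1]) force
  have "(SUP a. Qfun H P r pihat h x a) - Qfun H P r pihat h x ?a
      \<le> Qfun H P r pistar h x ?a - Qfun H P r pihat h x ?a"
    using SUP_Qfun_le_optimal[OF mdp rew opt h x] by simp
  also have "\<dots> = measure_pmf.expectation (P x ?a) ?D"
    by (simp add: Qfun_Vfun_Suc int)
  also have "\<dots> \<le> (if h = H then 0 else C_push H X P mu * measure_pmf.expectation (mu (Suc h)) ?D)"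
  proof (cases "h = H")
    case False
    then have h': "h \<in> {1..<H}" "Suc h \<in> {1..H}" using h by auto
    have "0 \<le> ?D y \<and> ?D y \<le> 1" if "y \<in> set_pmf (mu (Suc h))" for y
    proof -
      have y: "y \<in> X (Suc h)" using reset h' that by auto
      then have "Vfun H P r pihat (Suc h) y \<le> Vfun H P r pistar (Suc h) y"
        using opt h' unfolding optimal_policy_def by blast
      with Vfun_bounds[OF rew h'(2) y, of pistar] Vfun_bounds[OF rew h'(2) y, of pihat]
      show ?thesis by linarith
    qed
    then have "measure_pmf.expectation (P x ?a) ?D
        \<le> C_push H X P mu * measure_pmf.expectation (mu (Suc h)) ?D"
      by (intro pmf_expectation_le_if_pmf_le[where B=1] pmf_le_C_push_next[OF mdp conc h'(1) x])
    with False show ?thesis by simp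
  qed simp
  finally show ?thesis .
qed

theorem lemma1:
  fixes H :: nat and X :: "nat \<Rightarrow> 'x set" and P :: "'x \<Rightarrow> 'a \<Rightarrow> 'x pmf"
    and r :: "'x \<Rightarrow> 'a \<Rightarrow> real" and mu :: "nat \<Rightarrow> 'x pmf"
    and Pol :: "('x \<Rightarrow> 'a) set" and pistar pihat :: "'x \<Rightarrow> 'a" and h :: nat
  assumes mdp: "layered_mdp H X P"
    and rew: "rewards_bounded H X P r"
    and reset: "\<forall>k\<in>{1..H}. set_pmf (mu k) \<subseteq> X k"
    and conc: "\<exists>C. push_ok H X P mu C"
    and opt: "optimal_policy H X P r pistar"
    and realizable: "pistar \<in> Pol"
    and hH: "h \<in> {1..H}"
    and pihat: "pihat \<in> Pol"
  shows "eps_PC H P r mu Pol h pihat \<le>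
    (if h = H then 0
     else C_push H X P mu *
       measure_pmf.expectation (mu (Suc h))
         (\<lambda>x'. Vfun H P r pistar (Suc h) x' - Vfun H P r pihat (Suc h) x'))"
proof -
  define gap where "gap p x = (SUP a. Qfun H P r pihat h x a) - Qfun H P r pihat h x (p x)" for p x
  have in_layer: "x \<in> X h" if "x \<in> set_pmf (mu h)" for x
    using reset hH that by auto
  have gap_nonneg: "0 \<le> gap p x" if "x \<in> set_pmf (mu h)" for p x
    using Qfun_le_SUP[OF mdp rew hH in_layer[OF that]] by (simp add: gap_def)
  have "eps_PC H P r mu Pol h pihat \<le> measure_pmf.expectation (mu h) (gap pistar)"
    unfolding eps_PC_def gap_def[symmetric]
  proof (rule cINF_lower[OF _ realizable])
    show "bdd_below ((\<lambda>p. measure_pmf.expectation (mu h) (gap p)) ` Pol)"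
      using gap_nonneg by (intro bdd_belowI2[where m=0] integral_nonneg_AE AE_pmfI)
  qed
  also have "\<dots> \<le> (if h = H then 0
     else C_push H X P mu *
       measure_pmf.expectation (mu (Suc h))
         (\<lambda>x'. Vfun H P r pistar (Suc h) x' - Vfun H P r pihat (Suc h) x'))"
    using gap_nonneg Qfun_gap_le[OF mdp rew reset conc opt hH in_layer]
    by (intro pmf_expectation_bounds[where a=0, THEN conjunct2]) (simp add: gap_def)
  finally show ?thesis .
qed

end
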